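(* Let $p,q\in\mathbb N$ and $A\in\mathrm{Rec}_{p\times q}(\mathbb C)$. Then there exists a constant $C\ge0$ such that $|A[U,W]|\le C^{n+1}$ for all $n\in\mathbb N$ and all $(U,W)\in\mathcal M_{p\times q}^n$.
   Context: $\mathcal M_{p\times q}^n$ is the set of pairs $(U,W)$ of words of common length $n$ with $U\in\{0,\dots,p-1\}^n$, $W\in\{0,\dots,q-1\}^n$, and $\mathcal M_{p\times q}=\bigcup_n\mathcal M_{p\times q}^n$. For $A:\mathcal M_{p\times q}\to\mathbb C$ (values written $A[U,W]$) and $(S,T)\in\mathcal M_{p\times q}$, $(\rho(S,T)A)[U,W]=A[US,WT]$. $\mathrm{Rec}_{p\times q}(\mathbb C)$ is the set of $A$ such that the linear span of $\{\rho(S,T)A:(S,T)\in\mathcal M_{p\times q}\}$ is finite-dimensional. *)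

theory Defs
  imports Complex_Main
begin

definition Mpq :: "nat \<Rightarrow> nat \<Rightarrow> nat \<Rightarrow> (nat list \<times> nat list) set" where
  "Mpq p q n = {(U, W). length U = n \<and> length W = n \<and> (\<forall>x\<in>set U. x < p) \<and> (\<forall>x\<in>set W. x < q)}"

definition Mall :: "nat \<Rightarrow> nat \<Rightarrow> (nat list \<times> nat list) set" where
  "Mall p q = (\<Union>n. Mpq p q n)"

(* A function M_{p x q} -> C is represented by a function on all pairs of lists,
   normalised to be 0 outside M_{p x q}. *)
definition rho :: "nat \<Rightarrow> nat \<Rightarrow> nat list \<times> nat list \<Rightarrow> (nat list \<times> nat list \<Rightarrow> complex)
     \<Rightarrow> (nat list \<times> nat list \<Rightarrow> complex)" where
  "rho p q ST A = (\<lambda>(U, W). if (U, W) \<in> Mall p q then A (U @ fst ST, W @ snd ST) else 0)"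

definition cspan :: "('a \<Rightarrow> complex) set \<Rightarrow> ('a \<Rightarrow> complex) set" where
  "cspan S = {f. \<exists>F c. finite F \<and> F \<subseteq> S \<and> f = (\<lambda>x. \<Sum>g\<in>F. c g * g x)}"

(* finite-dimensional span: contained in the span of a finite set of functions *)
definition Rec :: "nat \<Rightarrow> nat \<Rightarrow> (nat list \<times> nat list \<Rightarrow> complex) set" where
  "Rec p q = {A. \<exists>B. finite B \<and> cspan {rho p q ST A | ST. ST \<in> Mall p q} \<subseteq> cspan B}"

end

theory Submission
  imports Defs "HOL-Library.Function_Algebras"
begin

(* The translates of A span a finite-dimensional space, so finitely many translates G span all
   of them. Appending one letter pair maps each element of G to a combination of G, and these
   finitely many coefficient matrices have l1 operator norm at most some K. By induction on n,
   the translate by a pair of words of length n is a combination of G whose coefficients have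
   l1 norm at most c0 K^n, and A(U,W) is the value of the (U,W)-translate at the empty pair. *)

definition lincomb :: "('a \<Rightarrow> complex) set \<Rightarrow> (('a \<Rightarrow> complex) \<Rightarrow> complex) \<Rightarrow> 'a \<Rightarrow> complex" where
  "lincomb G c = (\<lambda>x. \<Sum>g\<in>G. c g * g x)"

definition translates :: "nat \<Rightarrow> nat \<Rightarrow> (nat list \<times> nat list \<Rightarrow> complex)
    \<Rightarrow> (nat list \<times> nat list \<Rightarrow> complex) set" where
  "translates p q A = {rho p q ST A | ST. ST \<in> Mall p q}"

interpretation fun_space: vector_space "\<lambda>(c::complex) (f::'a \<Rightarrow> complex) x. c * f x"
  by unfold_locales (auto simp: fun_eq_iff algebra_simps)

lemma sum_fun_apply: "(\<Sum>g\<in>F. f g) x = (\<Sum>g\<in>F. f g x)"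
  by (induction F rule: infinite_finite_induct) auto

lemma lincomb_eq_sum: "lincomb G c = (\<Sum>g\<in>G. (\<lambda>x. c g * g x))"
  by (simp add: lincomb_def fun_eq_iff sum_fun_apply)

lemma cspan_eq_lincomb: "cspan B = {lincomb F c | F c. finite F \<and> F \<subseteq> B}"
  unfolding cspan_def lincomb_def by blast

lemma cspan_subset_span: "cspan B \<subseteq> fun_space.span B"
proof
  fix f assume "f \<in> cspan B"
  then obtain F c where "finite F" "F \<subseteq> B" "f = (\<Sum>g\<in>F. (\<lambda>x. c g * g x))"
    unfolding cspan_eq_lincomb lincomb_eq_sum by blast
  then show "f \<in> fun_space.span B"
    by (auto intro!: fun_space.span_sum intro: fun_space.span_scale[unfolded] fun_space.span_base)
qed

lemma span_finite_lincomb: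
  assumes "finite G" "f \<in> fun_space.span G"
  obtains c where "f = lincomb G c"
  using assms by (auto simp: fun_space.span_finite lincomb_eq_sum)

lemma cspan_superset: "S \<subseteq> cspan S"
proof
  fix f assume "f \<in> S"
  then show "f \<in> cspan S"
    unfolding cspan_eq_lincomb by (intro CollectI exI[of _ "{f}"] exI[of _ "\<lambda>_. 1"]) (auto simp: lincomb_def)
qed

lemma finite_spanning_subset:
  assumes "finite B" "S \<subseteq> cspan B"
  obtains G where "finite G" "G \<subseteq> S" "\<And>f. f \<in> S \<Longrightarrow> \<exists>c. f = lincomb G c"
proof -
  obtain G where G: "G \<subseteq> S" "fun_space.independent G" "S \<subseteq> fun_space.span G"
    using fun_space.maximal_independent_subset by blast
  have "G \<subseteq> fun_space.span B"
    using G(1) assms(2) cspan_subset_span by blast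
  then have "finite G"
    using fun_space.independent_span_bound[OF assms(1) G(2)] by blast
  moreover have "\<exists>c. f = lincomb G c" if "f \<in> S" for f
    using span_finite_lincomb[OF \<open>finite G\<close>] G(3) that by blast
  ultimately show thesis
    using that G(1) by blast
qed

lemma norm_lincomb_le:
  assumes "\<And>g. g \<in> G \<Longrightarrow> cmod (g x) \<le> L"
  shows "cmod (lincomb G c x) \<le> (\<Sum>g\<in>G. cmod (c g)) * L"
proof -
  have "cmod (lincomb G c x) \<le> (\<Sum>g\<in>G. cmod (c g) * cmod (g x))"
    unfolding lincomb_def by (metis (no_types, lifting) norm_mult norm_sum sum.cong)
  also have "\<dots> \<le> (\<Sum>g\<in>G. cmod (c g) * L)"
    using assms by (intro sum_mono mult_left_mono) auto
  finally show ?thesis by (simp add: sum_distrib_right)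
qed

lemma lincomb_of_lincombs:
  "(\<lambda>x. \<Sum>g\<in>G. c g * lincomb H (M g) x) = lincomb H (\<lambda>h. \<Sum>g\<in>G. c g * M g h)"
  unfolding lincomb_def
  by (simp add: fun_eq_iff sum_distrib_left sum_distrib_right mult.assoc sum.swap[of _ G])

lemma l1_norm_compose_le:
  assumes "\<And>g. g \<in> G \<Longrightarrow> (\<Sum>h\<in>H. cmod (M g h)) \<le> K"
  shows "(\<Sum>h\<in>H. cmod (\<Sum>g\<in>G. c g * M g h)) \<le> (\<Sum>g\<in>G. cmod (c g)) * K"
proof -
  have "(\<Sum>h\<in>H. cmod (\<Sum>g\<in>G. c g * M g h)) \<le> (\<Sum>h\<in>H. \<Sum>g\<in>G. cmod (c g) * cmod (M g h))"
    by (intro sum_mono) (metis (no_types, lifting) norm_mult norm_sum sum.cong)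
  also have "\<dots> = (\<Sum>g\<in>G. cmod (c g) * (\<Sum>h\<in>H. cmod (M g h)))"
    by (subst sum.swap) (simp add: sum_distrib_left)
  also have "\<dots> \<le> (\<Sum>g\<in>G. cmod (c g) * K)"
    using assms by (intro sum_mono mult_left_mono) auto
  finally show ?thesis by (simp add: sum_distrib_right)
qed

lemma Mall_iff:
  "(U, W) \<in> Mall p q \<longleftrightarrow> length U = length W \<and> (\<forall>x\<in>set U. x < p) \<and> (\<forall>x\<in>set W. x < q)"
  unfolding Mall_def Mpq_def by auto

lemma Mpq_Suc_cases:
  assumes "(U, W) \<in> Mpq p q (Suc n)"
  obtains a b U' W' where "U = a # U'" "W = b # W'" "a < p" "b < q" "(U', W') \<in> Mpq p q n"
  using assms by (cases U; cases W) (auto simp: Mpq_def)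

lemma rho_lincomb: "rho p q ST (lincomb G c) = (\<lambda>x. \<Sum>g\<in>G. c g * rho p q ST g x)"
  by (auto simp: rho_def lincomb_def fun_eq_iff)

lemma rho_rho_Cons:
  assumes "a < p" "b < q"
  shows "rho p q ([a], [b]) (rho p q (S, T) A) = rho p q (a # S, b # T) A"
  using assms by (auto simp: rho_def fun_eq_iff Mall_iff)

lemma rho_apply_Nil: "(U, W) \<in> Mall p q \<Longrightarrow> rho p q (U, W) A ([], []) = A (U, W)"
  by (simp add: rho_def Mall_iff)

lemma rho_translate_in_translates:
  assumes "g \<in> translates p q A" "a < p" "b < q"
  shows "rho p q ([a], [b]) g \<in> translates p q A"
proof -
  obtain S T where "(S, T) \<in> Mall p q" and g: "g = rho p q (S, T) A"
    using assms(1) unfolding translates_def by fastforce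
  with assms(2,3) have "(a # S, b # T) \<in> Mall p q" by (auto simp: Mall_iff)
  then show ?thesis
    unfolding translates_def g rho_rho_Cons[OF assms(2,3)] by blast
qed

lemma Rec_finite_spanning_translates:
  assumes "A \<in> Rec p q"
  obtains G where "finite G" "G \<subseteq> translates p q A"
    "\<And>f. f \<in> translates p q A \<Longrightarrow> \<exists>c. f = lincomb G c"
proof -
  obtain B where B: "finite B" "cspan (translates p q A) \<subseteq> cspan B"
    using assms unfolding Rec_def translates_def by blast
  have "translates p q A \<subseteq> cspan B"
    using B(2) cspan_superset by blast
  then obtain G where "finite G" "G \<subseteq> translates p q A"
    "\<And>f. f \<in> translates p q A \<Longrightarrow> \<exists>c. f = lincomb G c"
    using finite_spanning_subset[OF B(1)] by blast
  then show thesis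
    by (rule that)
qed

lemma letter_translate_matrices:
  assumes G: "finite G" "G \<subseteq> translates p q A"
    and spans: "\<And>f. f \<in> translates p q A \<Longrightarrow> \<exists>c. f = lincomb G c"
  obtains M and K :: real where "K \<ge> 1"
    "\<And>g a b. g \<in> G \<Longrightarrow> a < p \<Longrightarrow> b < q \<Longrightarrow> rho p q ([a], [b]) g = lincomb G (M g a b)"
    "\<And>g a b. g \<in> G \<Longrightarrow> a < p \<Longrightarrow> b < q \<Longrightarrow> (\<Sum>h\<in>G. cmod (M g a b h)) \<le> K"
proof -
  define M where "M g a b = (SOME m. rho p q ([a], [b]) g = lincomb G m)" for g a b
  have M: "rho p q ([a], [b]) g = lincomb G (M g a b)" if "g \<in> G" "a < p" "b < q" for g a b
  proof -
    have "rho p q ([a], [b]) g \<in> translates p q A"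
      using G(2) that by (blast intro: rho_translate_in_translates)
    then have "\<exists>m. rho p q ([a], [b]) g = lincomb G m"
      by (rule spans)
    then show ?thesis
      unfolding M_def by (rule someI_ex)
  qed
  define K where "K = 1 + (\<Sum>g\<in>G. \<Sum>a<p. \<Sum>b<q. \<Sum>h\<in>G. cmod (M g a b h))"
  have K: "(\<Sum>h\<in>G. cmod (M g a b h)) \<le> K" if "g \<in> G" "a < p" "b < q" for g a b
  proof -
    have "(\<Sum>h\<in>G. cmod (M g a b h)) \<le> (\<Sum>b<q. \<Sum>h\<in>G. cmod (M g a b h))"
      using that by (intro member_le_sum) (auto intro: sum_nonneg)
    also have "\<dots> \<le> (\<Sum>a<p. \<Sum>b<q. \<Sum>h\<in>G. cmod (M g a b h))"
      using that by (intro member_le_sum) (auto intro!: sum_nonneg)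
    also have "\<dots> \<le> (\<Sum>g\<in>G. \<Sum>a<p. \<Sum>b<q. \<Sum>h\<in>G. cmod (M g a b h))"
      using that G(1) by (intro member_le_sum) (auto intro!: sum_nonneg)
    finally show ?thesis unfolding K_def by simp
  qed
  have "K \<ge> 1"
    unfolding K_def by (auto intro!: sum_nonneg)
  then show thesis
    using M K by (rule that)
qed

lemma translates_coefficients_bound:
  assumes G: "finite G" "G \<subseteq> translates p q A"
    and spans: "\<And>f. f \<in> translates p q A \<Longrightarrow> \<exists>c. f = lincomb G c"
  obtains c0 K :: real where "c0 \<ge> 0" "K \<ge> 1"
    "\<And>n U W. (U, W) \<in> Mpq p q n \<Longrightarrow>
       \<exists>c. rho p q (U, W) A = lincomb G c \<and> (\<Sum>g\<in>G. cmod (c g)) \<le> c0 * K ^ n"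
proof -
  obtain M and K :: real where K1: "K \<ge> 1"
    and M: "\<And>g a b. g \<in> G \<Longrightarrow> a < p \<Longrightarrow> b < q \<Longrightarrow> rho p q ([a], [b]) g = lincomb G (M g a b)"
    and K: "\<And>g a b. g \<in> G \<Longrightarrow> a < p \<Longrightarrow> b < q \<Longrightarrow> (\<Sum>h\<in>G. cmod (M g a b h)) \<le> K"
    using letter_translate_matrices[OF G spans] by metis
  have "([], []) \<in> Mall p q" by (simp add: Mall_iff)
  then obtain c00 where c00: "rho p q ([], []) A = lincomb G c00"
    using spans unfolding translates_def by blast
  define c0 where "c0 = (\<Sum>g\<in>G. cmod (c00 g))"
  have "\<exists>c. rho p q (U, W) A = lincomb G c \<and> (\<Sum>g\<in>G. cmod (c g)) \<le> c0 * K ^ n"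
    if "(U, W) \<in> Mpq p q n" for n U W
    using that
  proof (induction n arbitrary: U W)
    case 0
    then show ?case using c00 by (auto simp: Mpq_def c0_def)
  next
    case (Suc n)
    then obtain a b U' W' where UW: "U = a # U'" "W = b # W'" and ab: "a < p" "b < q"
      and UW': "(U', W') \<in> Mpq p q n"
      by (elim Mpq_Suc_cases)
    obtain c where c: "rho p q (U', W') A = lincomb G c"
      and c_bound: "(\<Sum>g\<in>G. cmod (c g)) \<le> c0 * K ^ n"
      using Suc.IH[OF UW'] by blast
    have "rho p q (U, W) A = rho p q ([a], [b]) (rho p q (U', W') A)"
      by (simp add: UW rho_rho_Cons[OF ab])
    also have "\<dots> = (\<lambda>x. \<Sum>g\<in>G. c g * lincomb G (M g a b) x)"
      using M[OF _ ab] by (simp add: c rho_lincomb)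
    also have "\<dots> = lincomb G (\<lambda>h. \<Sum>g\<in>G. c g * M g a b h)"
      by (rule lincomb_of_lincombs)
    finally have "rho p q (U, W) A = lincomb G (\<lambda>h. \<Sum>g\<in>G. c g * M g a b h)" .
    moreover have "(\<Sum>h\<in>G. cmod (\<Sum>g\<in>G. c g * M g a b h)) \<le> c0 * K ^ Suc n"
    proof -
      have "(\<Sum>h\<in>G. cmod (\<Sum>g\<in>G. c g * M g a b h)) \<le> (\<Sum>g\<in>G. cmod (c g)) * K"
        using K[OF _ ab] by (rule l1_norm_compose_le)
      also have "\<dots> \<le> c0 * K ^ n * K"
        using c_bound K1 by (intro mult_right_mono) auto
      finally show ?thesis by (simp add: mult_ac)
    qed
    ultimately show ?case by blast
  qed
  moreover have "c0 \<ge> 0"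
    unfolding c0_def by (auto intro!: sum_nonneg)
  ultimately show thesis using that K1 by blast
qed

lemma mult_power_le_power_Suc:
  fixes a K :: real
  assumes "a \<ge> 0" "K \<ge> 1"
  shows "a * K ^ n \<le> ((1 + a) * K) ^ (n + 1)"
proof -
  have "a * K ^ n \<le> (1 + a) ^ (n + 1) * K ^ (n + 1)"
  proof (rule mult_mono)
    have "1 + a \<le> (1 + a) ^ (n + 1)"
      using assms(1) by (intro self_le_power) auto
    then show "a \<le> (1 + a) ^ (n + 1)"
      by linarith
    show "K ^ n \<le> K ^ (n + 1)"
      using assms(2) by (intro power_increasing) auto
  qed (use assms in auto)
  then show ?thesis by (simp only: power_mult_distrib)
qed

theorem mainTheorem7:
  fixes p q :: nat and A :: "nat list \<times> nat list \<Rightarrow> complex"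
  assumes "A \<in> Rec p q"
  shows "\<exists>C::real. C \<ge> 0 \<and> (\<forall>n. \<forall>(U, W) \<in> Mpq p q n. cmod (A (U, W)) \<le> C ^ (n + 1))"
proof -
  obtain G where G: "finite G" "G \<subseteq> translates p q A"
    and spans: "\<And>f. f \<in> translates p q A \<Longrightarrow> \<exists>c. f = lincomb G c"
    using Rec_finite_spanning_translates[OF assms] by blast
  obtain c0 K where c0: "c0 \<ge> 0" and K: "K \<ge> 1"
    and coeffs: "\<And>n U W. (U, W) \<in> Mpq p q n \<Longrightarrow>
       \<exists>c. rho p q (U, W) A = lincomb G c \<and> (\<Sum>g\<in>G. cmod (c g)) \<le> c0 * K ^ n"
    using translates_coefficients_bound[OF G spans] by blast
  define L where "L = (\<Sum>g\<in>G. cmod (g ([], [])))"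
  have L: "L \<ge> 0" "\<And>g. g \<in> G \<Longrightarrow> cmod (g ([], [])) \<le> L"
    unfolding L_def using G(1) by (auto intro: sum_nonneg member_le_sum)
  have "cmod (A (U, W)) \<le> ((1 + c0 * L) * K) ^ (n + 1)" if UW: "(U, W) \<in> Mpq p q n" for n U W
  proof -
    obtain c where c: "rho p q (U, W) A = lincomb G c" "(\<Sum>g\<in>G. cmod (c g)) \<le> c0 * K ^ n"
      using coeffs[OF UW] by blast
    have "(U, W) \<in> Mall p q"
      using UW unfolding Mall_def by blast
    then have "A (U, W) = lincomb G c ([], [])"
      by (simp flip: c(1) add: rho_apply_Nil)
    then have "cmod (A (U, W)) \<le> (\<Sum>g\<in>G. cmod (c g)) * L"
      using norm_lincomb_le[OF L(2)] by simp
    also have "\<dots> \<le> c0 * K ^ n * L"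
      using c(2) L(1) by (rule mult_right_mono)
    also have "\<dots> \<le> ((1 + c0 * L) * K) ^ (n + 1)"
      using mult_power_le_power_Suc[of "c0 * L" K n] c0 L(1) K by (simp add: mult_ac)
    finally show ?thesis .
  qed
  moreover have "(1 + c0 * L) * K \<ge> 0"
    using c0 L(1) K by simp
  ultimately show ?thesis
    by fast
qed

end
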